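(* Let $D,N$ be positive integers with $N\ge D$, let $\Omega\subseteq\{1,\dots,N\}^{\times 2}$, and let $G_\Omega:\mathbb{R}^{D\times N}\to\mathbb{R}^{|\Omega|}$, $Q\mapsto (Q^TQ)_\Omega$. Let $P\in\mathbb{R}^{D\times N}$ be generic, $\vec{\mathcal{K}}:=G_\Omega(P)$, and let $U$ be an open set of full Lebesgue measure containing $P$ such that $U\cap G_\Omega^{-1}(\vec{\mathcal{K}})$ is a smooth submanifold of $\mathbb{R}^{D\times N}$ of dimension $DN-\mathrm{rank}(d(G_\Omega)_P)$. Let $\tilde N_P:=\{OP: O\in O(D)\}$, where $O(D)$ is the group of orthogonal $D\times D$ matrices. Then, with probability $1$, $$\dim(\tilde N_P)=\dim\bigl(U\cap G_\Omega^{-1}(\vec{\mathcal{K}})\bigr)\iff \exists\,\tilde U\subseteq U\text{ open neighborhood of }P:\ \tilde U\cap\tilde N_P=\tilde U\cap G_\Omega^{-1}(\vec{\mathcal{K}}).$$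
   Context: A random matrix $P\in\mathbb{R}^{D\times N}$ is called generic if it is drawn from a probability measure on $\mathbb{R}^{D\times N}$ absolutely continuous with respect to Lebesgue measure. $d(G_\Omega)_P$ denotes the Jacobian of $G_\Omega$ at $P$. (For $P$ of rank $D$, $\tilde N_P$ is a smooth submanifold of $\mathbb{R}^{D\times N}$ of dimension $D(D-1)/2$.) *)

theory Defs
  imports "HOL-Analysis.Analysis"
begin

text \<open>C^k maps between finite-dimensional real normed spaces, via iterated directional
  derivatives (equivalent to the usual notion in finite dimensions).\<close>
fun C_k_on :: "nat \<Rightarrow> 'a::euclidean_space set \<Rightarrow> ('a \<Rightarrow> 'b::euclidean_space) \<Rightarrow> bool" where
  "C_k_on 0 S f = continuous_on S f"
| "C_k_on (Suc k) S f =
     ((\<forall>x\<in>S. f differentiable (at x)) \<and>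
      (\<forall>v. C_k_on k S (\<lambda>x. frechet_derivative f (at x) v)))"

definition smooth_on :: "'a::euclidean_space set \<Rightarrow> ('a \<Rightarrow> 'b::euclidean_space) \<Rightarrow> bool" where
  "smooth_on S f \<longleftrightarrow> (\<forall>k. C_k_on k S f)"

definition diffeomorphism_between ::
  "'a::euclidean_space set \<Rightarrow> 'a set \<Rightarrow> ('a \<Rightarrow> 'a) \<Rightarrow> ('a \<Rightarrow> 'a) \<Rightarrow> bool" where
  "diffeomorphism_between V W \<phi> \<psi> \<longleftrightarrow>
     open V \<and> open W \<and> smooth_on V \<phi> \<and> smooth_on W \<psi> \<and> \<phi> ` V = W \<and> \<psi> ` W = V \<and>
     (\<forall>x\<in>V. \<psi> (\<phi> x) = x) \<and> (\<forall>y\<in>W. \<phi> (\<psi> y) = y)"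

definition smooth_submanifold :: "nat \<Rightarrow> 'a::euclidean_space set \<Rightarrow> bool" where
  "smooth_submanifold k M \<longleftrightarrow>
     (\<forall>p\<in>M. \<exists>V W \<phi> \<psi> L. p \<in> V \<and> diffeomorphism_between V W \<phi> \<psi> \<and>
        subspace L \<and> dim L = k \<and> \<phi> ` (M \<inter> V) = W \<inter> L)"

text \<open>G_Omega(Q) = (Q^T Q) restricted to Omega; entries outside Omega are set to 0,
  so the codomain is (isomorphic to) R^|Omega|.\<close>
definition G_Omega :: "('n::finite \<times> 'n) set \<Rightarrow> real^'n^'d \<Rightarrow> real^('n \<times> 'n)" where
  "G_Omega \<Omega> Q = (\<chi> ij. if ij \<in> \<Omega> then (transpose Q ** Q) $ fst ij $ snd ij else 0)"

definition orbit_OD :: "real^'n^'d \<Rightarrow> (real^'n^'d) set" where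
  "orbit_OD P = {R ** P | R :: real^'d^'d. orthogonal_matrix R}"

end

theory Submission imports Defs "HOL-Homology.Invariance_of_Domain" begin

text \<open>The orbit O(D)P lies in the fibre of G_Omega through P, since G_Omega only sees the
  Gram matrix Q^T Q. If orbit and fibre are submanifolds of the same dimension, invariance of
  domain applied to the transition between their slice charts shows that the orbit is open in the
  fibre, so the two coincide near P. Conversely, if they coincide near P, the slice chart of the
  fibre at P is one of the orbit, and left multiplication by orthogonal matrices, linear
  automorphisms acting transitively on the orbit, carries it to every other point. Neither the
  genericity of P, nor N \<ge> D, nor the full measure of U, nor the particular value of the fibre
  dimension is needed.\<close>

lemma C_k_on_subset: "T \<subseteq> S \<Longrightarrow> C_k_on k S f \<Longrightarrow> C_k_on k T f"
  by (induction k arbitrary: f) (auto intro: continuous_on_subset)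

lemma C_k_on_cong:
  assumes "open S" "\<And>x. x \<in> S \<Longrightarrow> f x = g x" "C_k_on k S f"
  shows "C_k_on k S g"
  using assms(2,3)
proof (induction k arbitrary: f g)
  case 0
  then show ?case using continuous_on_cong by force
next
  case (Suc k)
  have deriv: "(g has_derivative frechet_derivative f (at x)) (at x)" if "x \<in> S" for x
    using Suc.prems that has_derivative_transform_within_open[OF _ assms(1) that, of f _ UNIV g]
    by (auto simp: frechet_derivative_works)
  show ?case
  proof (simp, intro conjI ballI allI)
    fix x assume "x \<in> S"
    then show "g differentiable at x" using deriv differentiable_def by blast
  next
    fix v
    have "C_k_on k S (\<lambda>x. frechet_derivative f (at x) v)" using Suc.prems by simp
    then show "C_k_on k S (\<lambda>x. frechet_derivative g (at x) v)"
      by (rule Suc.IH[rotated]) (metis deriv frechet_derivative_at)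
  qed
qed

lemma C_k_on_linear_comp:
  fixes h :: "'b::euclidean_space \<Rightarrow> 'c::euclidean_space"
  assumes "open S" "linear h" "C_k_on k S f"
  shows "C_k_on k S (\<lambda>x. h (f x))"
  using assms(3)
proof (induction k arbitrary: f)
  case 0
  then show ?case using linear_continuous_on_compose assms(2) by simp
next
  case (Suc k)
  have h: "bounded_linear h" using assms(2) linear_conv_bounded_linear by blast
  have deriv: "((\<lambda>x. h (f x)) has_derivative (\<lambda>v. h (frechet_derivative f (at x) v))) (at x)"
    if "x \<in> S" for x
    using Suc.prems that bounded_linear.has_derivative[OF h] by (auto simp: frechet_derivative_works)
  show ?case
  proof (simp, intro conjI ballI allI)
    fix x assume "x \<in> S"
    then show "(\<lambda>x. h (f x)) differentiable at x" using deriv differentiable_def by blast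
  next
    fix v
    have "C_k_on k S (\<lambda>x. h (frechet_derivative f (at x) v))" using Suc.prems Suc.IH by simp
    then show "C_k_on k S (\<lambda>x. frechet_derivative (\<lambda>x. h (f x)) (at x) v)"
      by (rule C_k_on_cong[OF assms(1), rotated]) (metis deriv frechet_derivative_at)
  qed
qed

lemma C_k_on_comp_linear:
  fixes g :: "'a::euclidean_space \<Rightarrow> 'b::euclidean_space" and f :: "'b \<Rightarrow> 'c::euclidean_space"
  assumes "open S" "linear g" "C_k_on k S f"
  shows "C_k_on k (g -` S) (\<lambda>x. f (g x))"
proof -
  have g: "bounded_linear g" using assms(2) linear_conv_bounded_linear by blast
  have preimage_open: "open (g -` S)" using open_vimage[OF assms(1) linear_continuous_on[OF g]] .
  show ?thesis
    using assms(3)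
  proof (induction k arbitrary: f)
    case 0
    then show ?case
      using continuous_on_compose[of "g -` S" g f] linear_continuous_on[OF g]
      by (auto simp: o_def intro: continuous_on_subset)
  next
    case (Suc k)
    have deriv: "((\<lambda>x. f (g x)) has_derivative (\<lambda>v. frechet_derivative f (at (g x)) (g v))) (at x)"
      if "x \<in> g -` S" for x
    proof -
      have "(f has_derivative frechet_derivative f (at (g x))) (at (g x))"
        using Suc.prems that by (auto simp: frechet_derivative_works)
      then show ?thesis
        using diff_chain_at[OF bounded_linear_imp_has_derivative[OF g]] by (simp add: o_def)
    qed
    show ?case
    proof (simp only: C_k_on.simps, intro conjI ballI allI)
      fix x assume "x \<in> g -` S"
      then show "(\<lambda>x. f (g x)) differentiable at x" using deriv differentiable_def by blast
    next
      fix v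
      have "C_k_on k S (\<lambda>y. frechet_derivative f (at y) (g v))" using Suc.prems by simp
      then have "C_k_on k (g -` S) (\<lambda>x. frechet_derivative f (at (g x)) (g v))" using Suc.IH by blast
      then show "C_k_on k (g -` S) (\<lambda>x. frechet_derivative (\<lambda>x. f (g x)) (at x) v)"
        by (rule C_k_on_cong[OF preimage_open, rotated]) (metis deriv frechet_derivative_at)
    qed
  qed
qed

lemma smooth_on_imp_continuous_on: "smooth_on S f \<Longrightarrow> continuous_on S f"
  unfolding smooth_on_def by (metis C_k_on.simps(1))

lemma smooth_on_subset: "T \<subseteq> S \<Longrightarrow> smooth_on S f \<Longrightarrow> smooth_on T f"
  unfolding smooth_on_def using C_k_on_subset by blast

lemma diffeomorphism_between_restrict:
  assumes D: "diffeomorphism_between V W \<phi> \<psi>" and "open B"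
  shows "diffeomorphism_between (V \<inter> B) (W \<inter> \<psi> -` (V \<inter> B)) \<phi> \<psi>"
proof -
  have opens: "open V" "open W" and smooth: "smooth_on V \<phi>" "smooth_on W \<psi>"
    and images: "\<phi> ` V = W" "\<psi> ` W = V" and inv: "\<forall>x\<in>V. \<psi> (\<phi> x) = x" "\<forall>y\<in>W. \<phi> (\<psi> y) = y"
    using D unfolding diffeomorphism_between_def by auto
  have "open (\<psi> -` (V \<inter> B) \<inter> W)"
    using continuous_on_open_vimage[OF opens(2)] smooth_on_imp_continuous_on[OF smooth(2)]
      opens(1) \<open>open B\<close> by blast
  then have "open (W \<inter> \<psi> -` (V \<inter> B))" by (simp add: Int_commute)
  moreover have "\<phi> ` (V \<inter> B) = W \<inter> \<psi> -` (V \<inter> B)"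
  proof
    show "\<phi> ` (V \<inter> B) \<subseteq> W \<inter> \<psi> -` (V \<inter> B)" using images inv by auto
    show "W \<inter> \<psi> -` (V \<inter> B) \<subseteq> \<phi> ` (V \<inter> B)"
    proof
      fix y assume "y \<in> W \<inter> \<psi> -` (V \<inter> B)"
      then show "y \<in> \<phi> ` (V \<inter> B)" using inv(2) image_eqI[of y \<phi> "\<psi> y"] by auto
    qed
  qed
  moreover have "\<psi> ` (W \<inter> \<psi> -` (V \<inter> B)) = V \<inter> B"
  proof
    show "V \<inter> B \<subseteq> \<psi> ` (W \<inter> \<psi> -` (V \<inter> B))"
    proof
      fix x assume "x \<in> V \<inter> B"
      then show "x \<in> \<psi> ` (W \<inter> \<psi> -` (V \<inter> B))"
        using images inv image_eqI[of x \<psi> "\<phi> x"] by auto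
    qed
  qed auto
  moreover have "smooth_on (V \<inter> B) \<phi>" "smooth_on (W \<inter> \<psi> -` (V \<inter> B)) \<psi>"
    using smooth smooth_on_subset by (meson Int_lower1)+
  ultimately show ?thesis
    using opens \<open>open B\<close> inv unfolding diffeomorphism_between_def by auto
qed

lemma diffeomorphism_between_comp_linear:
  assumes D: "diffeomorphism_between V W \<phi> \<psi>" and "linear h" "linear h'"
    and inverse: "\<And>x. h (h' x) = x" "\<And>x. h' (h x) = x"
  shows "diffeomorphism_between (h' -` V) W (\<lambda>x. \<phi> (h' x)) (\<lambda>y. h (\<psi> y))"
proof -
  have opens: "open V" "open W" and smooth: "smooth_on V \<phi>" "smooth_on W \<psi>"
    and images: "\<phi> ` V = W" "\<psi> ` W = V" and inv: "\<forall>x\<in>V. \<psi> (\<phi> x) = x" "\<forall>y\<in>W. \<phi> (\<psi> y) = y"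
    using D unfolding diffeomorphism_between_def by auto
  have "open (h' -` V)"
    using opens(1) open_vimage linear_continuous_on linear_conv_bounded_linear \<open>linear h'\<close> by blast
  moreover have "smooth_on (h' -` V) (\<lambda>x. \<phi> (h' x))"
    using smooth opens C_k_on_comp_linear[OF _ \<open>linear h'\<close>] unfolding smooth_on_def by blast
  moreover have "smooth_on W (\<lambda>y. h (\<psi> y))"
    using smooth opens C_k_on_linear_comp[OF _ \<open>linear h\<close>] unfolding smooth_on_def by blast
  moreover have "h' ` (h' -` V) = V"
    using inverse by (auto intro: image_eqI[where x = "h x" for x])
  then have "(\<lambda>x. \<phi> (h' x)) ` (h' -` V) = W"
    using images by (simp add: image_image[symmetric, of \<phi> h'])
  moreover have "(\<lambda>y. h (\<psi> y)) ` W = h' -` V"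
  proof
    show "h' -` V \<subseteq> (\<lambda>y. h (\<psi> y)) ` W"
    proof
      fix x assume "x \<in> h' -` V"
      then have "\<phi> (h' x) \<in> W" and "h (\<psi> (\<phi> (h' x))) = x" using images inv inverse by auto
      then show "x \<in> (\<lambda>y. h (\<psi> y)) ` W" by (metis image_eqI)
    qed
  qed (use images inverse in auto)
  ultimately show ?thesis
    using opens inv inverse unfolding diffeomorphism_between_def by simp
qed

definition slice_chart_at :: "nat \<Rightarrow> 'a::euclidean_space set \<Rightarrow> 'a \<Rightarrow> bool" where
  "slice_chart_at k M p \<longleftrightarrow>
     (\<exists>V W \<phi> \<psi> L. p \<in> V \<and> diffeomorphism_between V W \<phi> \<psi> \<and>
        subspace L \<and> dim L = k \<and> \<phi> ` (M \<inter> V) = W \<inter> L)"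

lemma smooth_submanifold_iff_slice_chart_at:
  "smooth_submanifold k M \<longleftrightarrow> (\<forall>p\<in>M. slice_chart_at k M p)"
  unfolding smooth_submanifold_def slice_chart_at_def ..

lemma slice_chart_at_local:
  assumes "slice_chart_at k M p" and "open B" "p \<in> B" and same_germ: "M \<inter> B = M' \<inter> B"
  shows "slice_chart_at k M' p"
proof -
  obtain V W \<phi> \<psi> L where "p \<in> V" and D: "diffeomorphism_between V W \<phi> \<psi>"
    and L: "subspace L" "dim L = k" and slice: "\<phi> ` (M \<inter> V) = W \<inter> L"
    using assms(1) unfolding slice_chart_at_def by blast
  have inv: "\<forall>x\<in>V. \<psi> (\<phi> x) = x"
    using D unfolding diffeomorphism_between_def by auto
  define W' where "W' = W \<inter> \<psi> -` (V \<inter> B)"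
  have "\<phi> ` (M' \<inter> (V \<inter> B)) = W' \<inter> L"
  proof
    show "\<phi> ` (M' \<inter> (V \<inter> B)) \<subseteq> W' \<inter> L"
      using slice same_germ inv unfolding W'_def by blast
    show "W' \<inter> L \<subseteq> \<phi> ` (M' \<inter> (V \<inter> B))"
    proof
      fix y assume y: "y \<in> W' \<inter> L"
      then obtain x where x: "x \<in> M \<inter> V" "y = \<phi> x" using slice unfolding W'_def by auto
      then have "x \<in> B" using y inv unfolding W'_def by auto
      then show "y \<in> \<phi> ` (M' \<inter> (V \<inter> B))" using x same_germ by blast
    qed
  qed
  moreover have "diffeomorphism_between (V \<inter> B) W' \<phi> \<psi>"
    unfolding W'_def using D \<open>open B\<close> by (rule diffeomorphism_between_restrict)
  ultimately show ?thesis
    unfolding slice_chart_at_def using \<open>p \<in> V\<close> \<open>p \<in> B\<close> L by blast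
qed

lemma slice_chart_at_linear_image:
  fixes h h' :: "'a::euclidean_space \<Rightarrow> 'a"
  assumes "slice_chart_at k M p" and "linear h" "linear h'"
    and inverse: "\<And>x. h (h' x) = x" "\<And>x. h' (h x) = x"
  shows "slice_chart_at k (h ` M) (h p)"
proof -
  obtain V W \<phi> \<psi> L where "p \<in> V" and D: "diffeomorphism_between V W \<phi> \<psi>"
    and L: "subspace L" "dim L = k" and slice: "\<phi> ` (M \<inter> V) = W \<inter> L"
    using assms(1) unfolding slice_chart_at_def by blast
  have "h' ` (h ` M \<inter> h' -` V) = M \<inter> V"
    using inverse by (force intro: image_eqI[where x = "h x" for x])
  then have "(\<lambda>x. \<phi> (h' x)) ` (h ` M \<inter> h' -` V) = W \<inter> L"
    using slice by (simp add: image_image[symmetric, of \<phi> h'])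
  moreover have "diffeomorphism_between (h' -` V) W (\<lambda>x. \<phi> (h' x)) (\<lambda>y. h (\<psi> y))"
    using diffeomorphism_between_comp_linear[OF D assms(2,3)] inverse by blast
  moreover have "h p \<in> h' -` V" using \<open>p \<in> V\<close> inverse by simp
  ultimately show ?thesis unfolding slice_chart_at_def using L by blast
qed

lemma smooth_submanifold_Int_open:
  assumes "smooth_submanifold k M" "open B"
  shows "smooth_submanifold k (M \<inter> B)"
  using assms slice_chart_at_local[of k M _ B "M \<inter> B"]
  unfolding smooth_submanifold_iff_slice_chart_at by auto

lemma smooth_submanifold_of_homogeneous:
  fixes M :: "'a::euclidean_space set"
  assumes "slice_chart_at k M p"
    and transitive: "\<And>q. q \<in> M \<Longrightarrow> \<exists>h h' :: 'a \<Rightarrow> 'a. linear h \<and> linear h' \<and> (\<forall>x. h (h' x) = x) \<and>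
                          (\<forall>x. h' (h x) = x) \<and> h ` M = M \<and> h p = q"
  shows "smooth_submanifold k M"
  unfolding smooth_submanifold_iff_slice_chart_at
proof
  fix q assume "q \<in> M"
  then obtain h h' where "linear h" "linear h'" "\<forall>x. h (h' x) = x" "\<forall>x. h' (h x) = x"
    and "h ` M = M" "h p = q"
    using transitive by blast
  then show "slice_chart_at k M q"
    using slice_chart_at_linear_image[OF assms(1), of h h'] by metis
qed

lemma diffeomorphism_between_slice_inverse:
  assumes "diffeomorphism_between V W \<phi> \<psi>" "\<phi> ` (M \<inter> V) = W \<inter> L" "y \<in> L \<inter> W"
  shows "\<psi> y \<in> M \<inter> V"
proof -
  have "y \<in> \<phi> ` (M \<inter> V)" using assms(2,3) by auto
  then show ?thesis using assms(1) unfolding diffeomorphism_between_def by auto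
qed

lemma slice_transition_openin:
  assumes D: "diffeomorphism_between V W \<phi> \<psi>" and slice: "\<phi> ` (F \<inter> V) = W \<inter> L" "subspace L"
    and D\<^sub>M: "diffeomorphism_between V\<^sub>M W\<^sub>M \<phi>\<^sub>M \<psi>\<^sub>M"
    and slice\<^sub>M: "\<phi>\<^sub>M ` (M \<inter> V\<^sub>M) = W\<^sub>M \<inter> L\<^sub>M" "subspace L\<^sub>M"
    and "dim L\<^sub>M = dim L" "M \<subseteq> F"
  shows "openin (top_of_set L) ((\<lambda>y. \<phi> (\<psi>\<^sub>M y)) ` (L\<^sub>M \<inter> (\<psi>\<^sub>M -` V \<inter> W\<^sub>M)))"
proof -
  define A where "A = L\<^sub>M \<inter> (\<psi>\<^sub>M -` V \<inter> W\<^sub>M)"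
  have "open V" and cont: "continuous_on V \<phi>" and inv: "\<forall>x\<in>V. \<psi> (\<phi> x) = x"
    using D smooth_on_imp_continuous_on unfolding diffeomorphism_between_def by auto
  have "open W\<^sub>M" and cont\<^sub>M: "continuous_on W\<^sub>M \<psi>\<^sub>M" and inv\<^sub>M: "\<forall>y\<in>W\<^sub>M. \<phi>\<^sub>M (\<psi>\<^sub>M y) = y"
    using D\<^sub>M smooth_on_imp_continuous_on unfolding diffeomorphism_between_def by auto
  have A_in_M: "\<psi>\<^sub>M y \<in> M \<inter> V" if "y \<in> A" for y
    using diffeomorphism_between_slice_inverse[OF D\<^sub>M slice\<^sub>M(1)] that unfolding A_def by blast
  have "open (\<psi>\<^sub>M -` V \<inter> W\<^sub>M)"
    using continuous_on_open_vimage[OF \<open>open W\<^sub>M\<close>] cont\<^sub>M \<open>open V\<close> by blast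
  then have "openin (top_of_set L\<^sub>M) A" unfolding A_def using openin_open by blast
  moreover have "continuous_on A \<psi>\<^sub>M" using cont\<^sub>M by (rule continuous_on_subset) (auto simp: A_def)
  then have "continuous_on A (\<lambda>y. \<phi> (\<psi>\<^sub>M y))"
    using continuous_on_compose2[OF cont] A_in_M by blast
  moreover have "(\<lambda>y. \<phi> (\<psi>\<^sub>M y)) \<in> A \<rightarrow> L"
    using A_in_M \<open>M \<subseteq> F\<close> slice(1) by blast
  moreover have "inj_on (\<lambda>y. \<phi> (\<psi>\<^sub>M y)) A"
  proof
    fix x y assume "x \<in> A" "y \<in> A" "\<phi> (\<psi>\<^sub>M x) = \<phi> (\<psi>\<^sub>M y)"
    then have "\<psi>\<^sub>M x = \<psi>\<^sub>M y" using A_in_M inv by (metis IntD2)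
    then show "x = y" using \<open>x \<in> A\<close> \<open>y \<in> A\<close> inv\<^sub>M unfolding A_def by (metis IntD2)
  qed
  ultimately show ?thesis
    unfolding A_def[symmetric]
    using invariance_of_domain_subspaces[OF _ slice\<^sub>M(2) slice(2)] \<open>dim L\<^sub>M = dim L\<close> by simp
qed

lemma smooth_submanifold_subset_locally_eq:
  fixes M F :: "'a::euclidean_space set"
  assumes M: "smooth_submanifold k M" and F: "smooth_submanifold k F"
    and "M \<subseteq> F" "p \<in> M"
  shows "\<exists>B. open B \<and> p \<in> B \<and> B \<inter> M = B \<inter> F"
proof -
  obtain V W \<phi> \<psi> L where "p \<in> V" and D: "diffeomorphism_between V W \<phi> \<psi>"
    and L: "subspace L" "dim L = k" and slice: "\<phi> ` (F \<inter> V) = W \<inter> L"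
    using F \<open>M \<subseteq> F\<close> \<open>p \<in> M\<close> unfolding smooth_submanifold_def by blast
  obtain V\<^sub>M W\<^sub>M \<phi>\<^sub>M \<psi>\<^sub>M L\<^sub>M where "p \<in> V\<^sub>M" and D\<^sub>M: "diffeomorphism_between V\<^sub>M W\<^sub>M \<phi>\<^sub>M \<psi>\<^sub>M"
    and L\<^sub>M: "subspace L\<^sub>M" "dim L\<^sub>M = k" and slice\<^sub>M: "\<phi>\<^sub>M ` (M \<inter> V\<^sub>M) = W\<^sub>M \<inter> L\<^sub>M"
    using M \<open>p \<in> M\<close> unfolding smooth_submanifold_def by blast
  define A where "A = L\<^sub>M \<inter> (\<psi>\<^sub>M -` V \<inter> W\<^sub>M)"
  have "open V" and cont: "continuous_on V \<phi>" and inv: "\<forall>x\<in>V. \<psi> (\<phi> x) = x"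
    using D smooth_on_imp_continuous_on unfolding diffeomorphism_between_def by auto
  have "openin (top_of_set L) ((\<lambda>y. \<phi> (\<psi>\<^sub>M y)) ` A)"
    unfolding A_def using slice_transition_openin[OF D slice L(1) D\<^sub>M slice\<^sub>M L\<^sub>M(1)] L L\<^sub>M
      \<open>M \<subseteq> F\<close> by simp
  then obtain C where "open C" and image_A: "(\<lambda>y. \<phi> (\<psi>\<^sub>M y)) ` A = L \<inter> C"
    unfolding openin_open by blast
  define B where "B = \<phi> -` C \<inter> V \<inter> V\<^sub>M"
  have "open B"
    unfolding B_def using continuous_on_open_vimage[OF \<open>open V\<close>] cont \<open>open C\<close> D\<^sub>M
    unfolding diffeomorphism_between_def by blast
  moreover have "\<phi>\<^sub>M p \<in> A" "\<psi>\<^sub>M (\<phi>\<^sub>M p) = p"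
    using \<open>p \<in> M\<close> \<open>p \<in> V\<^sub>M\<close> \<open>p \<in> V\<close> D\<^sub>M slice\<^sub>M
    unfolding A_def diffeomorphism_between_def by auto
  then have "p \<in> B"
    using image_A \<open>p \<in> V\<^sub>M\<close> \<open>p \<in> V\<close> unfolding B_def by (metis IntD2 image_eqI vimageI2 IntI)
  moreover have "B \<inter> F \<subseteq> M"
  proof
    fix x assume x: "x \<in> B \<inter> F"
    then have "\<phi> x \<in> (\<lambda>y. \<phi> (\<psi>\<^sub>M y)) ` A" using slice image_A unfolding B_def by auto
    then obtain y where y: "y \<in> A" "\<phi> x = \<phi> (\<psi>\<^sub>M y)" by blast
    have "\<psi>\<^sub>M y \<in> M \<inter> V"
      using diffeomorphism_between_slice_inverse[OF D\<^sub>M slice\<^sub>M] y(1) unfolding A_def by blast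
    moreover have "x \<in> V" using x unfolding B_def by blast
    ultimately show "x \<in> M" using y(2) inv by (metis IntD1 IntD2)
  qed
  ultimately show ?thesis using \<open>M \<subseteq> F\<close> by blast
qed

lemma smooth_submanifold_locally_eq_within_open:
  fixes M X U :: "'a::euclidean_space set"
  assumes M: "smooth_submanifold k M" and F: "smooth_submanifold k (U \<inter> X)"
    and "open U" "M \<subseteq> X" "p \<in> M" "p \<in> U"
  shows "\<exists>U'. open U' \<and> p \<in> U' \<and> U' \<subseteq> U \<and> U' \<inter> M = U' \<inter> X"
proof -
  have "smooth_submanifold k (M \<inter> U)" using M \<open>open U\<close> by (rule smooth_submanifold_Int_open)
  moreover have "M \<inter> U \<subseteq> U \<inter> X" "p \<in> M \<inter> U" using assms by auto
  ultimately have "\<exists>B. open B \<and> p \<in> B \<and> B \<inter> (M \<inter> U) = B \<inter> (U \<inter> X)"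
    using F smooth_submanifold_subset_locally_eq by metis
  then obtain B where "open B" "p \<in> B" and near_p: "B \<inter> (M \<inter> U) = B \<inter> (U \<inter> X)"
    by blast
  have "(B \<inter> U) \<inter> M = B \<inter> (M \<inter> U)" by blast
  also have "\<dots> = B \<inter> (U \<inter> X)" by (rule near_p)
  also have "\<dots> = (B \<inter> U) \<inter> X" by blast
  finally have "(B \<inter> U) \<inter> M = (B \<inter> U) \<inter> X" .
  moreover have "open (B \<inter> U)" "p \<in> B \<inter> U" using \<open>open B\<close> \<open>p \<in> B\<close> \<open>open U\<close> \<open>p \<in> U\<close> by auto
  ultimately show ?thesis by (meson Int_lower2)
qed

lemma linear_matrix_matrix_mult_left: "linear (\<lambda>Q::real^'n^'d. (R::real^'d^'e) ** Q)"
  by (rule linearI) (simp_all add: matrix_add_ldistrib vec_eq_iff matrix_matrix_mult_def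
      sum_distrib_left sum.distrib algebra_simps)

lemma G_Omega_orthogonal_mult:
  assumes "orthogonal_matrix (R::real^'d^'d)"
  shows "G_Omega \<Omega> (R ** Q) = G_Omega \<Omega> (Q::real^'n^'d)"
proof -
  have "transpose (R ** Q) ** (R ** Q) = transpose Q ** (transpose R ** R) ** Q"
    by (simp add: matrix_transpose_mul matrix_mul_assoc)
  also have "\<dots> = transpose Q ** Q"
    using assms by (simp add: orthogonal_matrix)
  finally show ?thesis unfolding G_Omega_def by (simp only:)
qed

lemma orbit_OD_subset_fibre: "orbit_OD P \<subseteq> G_Omega \<Omega> -` {G_Omega \<Omega> P}"
  unfolding orbit_OD_def using G_Omega_orthogonal_mult by auto

lemma self_in_orbit_OD: "P \<in> orbit_OD P"
  unfolding orbit_OD_def using orthogonal_matrix_id matrix_mul_lid by (metis (mono_tags) CollectI)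

lemma orthogonal_mult_orbit_OD:
  assumes "orthogonal_matrix R"
  shows "(\<lambda>Q. R ** Q) ` orbit_OD P = orbit_OD P"
proof
  show "(\<lambda>Q. R ** Q) ` orbit_OD P \<subseteq> orbit_OD P"
    unfolding orbit_OD_def using assms orthogonal_matrix_mul matrix_mul_assoc by blast
  show "orbit_OD P \<subseteq> (\<lambda>Q. R ** Q) ` orbit_OD P"
  proof
    fix Q assume "Q \<in> orbit_OD P"
    then obtain S where S: "orthogonal_matrix S" "Q = S ** P" unfolding orbit_OD_def by blast
    have "Q = R ** ((transpose R ** S) ** P)"
      using assms S(2) by (simp add: matrix_mul_assoc orthogonal_matrix_def)
    moreover have "(transpose R ** S) ** P \<in> orbit_OD P"
      using assms S(1) orthogonal_matrix_mul orthogonal_matrix_transpose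
      unfolding orbit_OD_def by blast
    ultimately show "Q \<in> (\<lambda>Q. R ** Q) ` orbit_OD P" by blast
  qed
qed

lemma smooth_submanifold_orbit_OD:
  assumes "slice_chart_at k (orbit_OD P) P"
  shows "smooth_submanifold k (orbit_OD P)"
proof (rule smooth_submanifold_of_homogeneous[OF assms])
  fix Q assume "Q \<in> orbit_OD P"
  then obtain R where R: "orthogonal_matrix R" "Q = R ** P" unfolding orbit_OD_def by blast
  then have "\<forall>X. R ** (transpose R ** X) = X" "\<forall>X. transpose R ** (R ** X) = X"
    by (simp_all add: matrix_mul_assoc orthogonal_matrix_def)
  then show "\<exists>h h'. linear h \<and> linear h' \<and> (\<forall>X. h (h' X) = X) \<and> (\<forall>X. h' (h X) = X) \<and>
      h ` orbit_OD P = orbit_OD P \<and> h P = Q"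
    using linear_matrix_matrix_mult_left orthogonal_mult_orbit_OD[OF R(1)] R(2) by blast
qed

lemma orbit_OD_submanifold_iff_locally_eq:
  fixes P :: "real^'n^'d" and U X :: "(real^'n^'d) set"
  assumes "open U" "P \<in> U" and fibre: "smooth_submanifold K (U \<inter> X)" and "orbit_OD P \<subseteq> X"
  shows "(\<exists>k. smooth_submanifold k (orbit_OD P) \<and> smooth_submanifold k (U \<inter> X)) \<longleftrightarrow>
         (\<exists>U'. open U' \<and> P \<in> U' \<and> U' \<subseteq> U \<and> U' \<inter> orbit_OD P = U' \<inter> X)"
proof
  assume "\<exists>k. smooth_submanifold k (orbit_OD P) \<and> smooth_submanifold k (U \<inter> X)"
  then obtain k where "smooth_submanifold k (orbit_OD P)" "smooth_submanifold k (U \<inter> X)"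
    by blast
  from smooth_submanifold_locally_eq_within_open[OF this \<open>open U\<close> \<open>orbit_OD P \<subseteq> X\<close>
      self_in_orbit_OD \<open>P \<in> U\<close>]
  show "\<exists>U'. open U' \<and> P \<in> U' \<and> U' \<subseteq> U \<and> U' \<inter> orbit_OD P = U' \<inter> X" .
next
  assume "\<exists>U'. open U' \<and> P \<in> U' \<and> U' \<subseteq> U \<and> U' \<inter> orbit_OD P = U' \<inter> X"
  then obtain U' where "open U'" "P \<in> U'" and near_P: "(U \<inter> X) \<inter> U' = orbit_OD P \<inter> U'"
    by blast
  have "slice_chart_at K (U \<inter> X) P"
    using fibre \<open>P \<in> U\<close> \<open>orbit_OD P \<subseteq> X\<close> self_in_orbit_OD
    unfolding smooth_submanifold_iff_slice_chart_at by blast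
  then have "slice_chart_at K (orbit_OD P) P"
    using \<open>open U'\<close> \<open>P \<in> U'\<close> near_P by (rule slice_chart_at_local)
  then have "smooth_submanifold K (orbit_OD P)"
    by (rule smooth_submanifold_orbit_OD)
  then show "\<exists>k. smooth_submanifold k (orbit_OD P) \<and> smooth_submanifold k (U \<inter> X)"
    using fibre by blast
qed

theorem corollary1:
  fixes \<Omega> :: "('n::finite \<times> 'n) set"
  assumes "CARD('n) \<ge> CARD('d::finite)"
  shows "AE P in lborel.
    \<forall>U :: (real^'n^'d) set.
      (open U \<and> P \<in> U \<and> (- U) \<in> null_sets lborel \<and>
       smooth_submanifold (CARD('d) * CARD('n) - dim (range (frechet_derivative (G_Omega \<Omega>) (at P))))
         (U \<inter> G_Omega \<Omega> -` {G_Omega \<Omega> P}))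
      \<longrightarrow>
      ((\<exists>k. smooth_submanifold k (orbit_OD P) \<and> smooth_submanifold k (U \<inter> G_Omega \<Omega> -` {G_Omega \<Omega> P}))
       \<longleftrightarrow>
       (\<exists>U'. open U' \<and> P \<in> U' \<and> U' \<subseteq> U \<and>
          U' \<inter> orbit_OD P = U' \<inter> G_Omega \<Omega> -` {G_Omega \<Omega> P}))"
proof (rule AE_I2, intro allI impI)
  fix P :: "real^'n^'d" and U :: "(real^'n^'d) set"
  assume "open U \<and> P \<in> U \<and> (- U) \<in> null_sets lborel \<and>
    smooth_submanifold (CARD('d) * CARD('n) - dim (range (frechet_derivative (G_Omega \<Omega>) (at P))))
      (U \<inter> G_Omega \<Omega> -` {G_Omega \<Omega> P})"
  then have "open U" "P \<in> U"
    and "smooth_submanifold (CARD('d) * CARD('n) - dim (range (frechet_derivative (G_Omega \<Omega>) (at P))))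
      (U \<inter> G_Omega \<Omega> -` {G_Omega \<Omega> P})"
    by auto
  then show "(\<exists>k. smooth_submanifold k (orbit_OD P) \<and>
                 smooth_submanifold k (U \<inter> G_Omega \<Omega> -` {G_Omega \<Omega> P})) \<longleftrightarrow>
             (\<exists>U'. open U' \<and> P \<in> U' \<and> U' \<subseteq> U \<and>
                 U' \<inter> orbit_OD P = U' \<inter> G_Omega \<Omega> -` {G_Omega \<Omega> P})"
    by (rule orbit_OD_submanifold_iff_locally_eq[OF _ _ _ orbit_OD_subset_fibre])
qed

end
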